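(* Let $G$ be a finite simple graph with adjacency matrix $A$. Then every realization of $G$ by Pauli strings uses strings of length at least $\operatorname{rank}_{\mathbb{F}_2}(A)/2$, and there exists a realization of $G$ by Pauli strings of length exactly $\operatorname{rank}_{\mathbb{F}_2}(A)/2$.
   Context: $\operatorname{rank}_{\mathbb{F}_2}(A)$ is the rank of the $0/1$ matrix $A$ over the field with two elements (it is even since $A$ is symmetric with zero diagonal). A Pauli string of length $\ell$ is a tensor product of $\ell$ matrices from $\{I,X,Y,Z\}$. A realization of $G$ on $\{1,\dots,n\}$ is a tuple $(S_1,\dots,S_n)$ of Pauli strings of a common length with $S_iS_j=-S_jS_i$ if $i\sim j$ and $S_iS_j=S_jS_i$ otherwise. *)

theory Defs
  imports "HOL-Analysis.Analysis" "HOL-Library.Z2"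
begin

text \<open>Single-qubit Pauli matrices, as 2x2 complex matrices indexed by bool (False = 0, True = 1).\<close>
datatype pauli = PI | PX | PY | PZ

fun pauli_mat :: "pauli \<Rightarrow> bool \<Rightarrow> bool \<Rightarrow> complex" where
  "pauli_mat PI a b = (if a = b then 1 else 0)"
| "pauli_mat PX a b = (if a \<noteq> b then 1 else 0)"
| "pauli_mat PY a b = (if a = b then 0 else if a then \<i> else - \<i>)"
| "pauli_mat PZ a b = (if a = b then (if a then -1 else 1) else 0)"

text \<open>Basis of (C^2)^(tensor l): bit strings of length l.\<close>
definition bitstrings :: "nat \<Rightarrow> bool list set" where
  "bitstrings l = {x. length x = l}"

text \<open>The 2^l x 2^l matrix of a Pauli string (tensor product of its factors).\<close>
definition pauli_string_mat :: "pauli list \<Rightarrow> bool list \<Rightarrow> bool list \<Rightarrow> complex" where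
  "pauli_string_mat ps x y = (\<Prod>k<length ps. pauli_mat (ps ! k) (x ! k) (y ! k))"

definition mat_mult_l :: "nat \<Rightarrow> (bool list \<Rightarrow> bool list \<Rightarrow> complex)
    \<Rightarrow> (bool list \<Rightarrow> bool list \<Rightarrow> complex) \<Rightarrow> bool list \<Rightarrow> bool list \<Rightarrow> complex" where
  "mat_mult_l l M N x y = (\<Sum>z\<in>bitstrings l. M x z * N z y)"

definition anticommute :: "nat \<Rightarrow> pauli list \<Rightarrow> pauli list \<Rightarrow> bool" where
  "anticommute l P Q \<longleftrightarrow> (\<forall>x\<in>bitstrings l. \<forall>y\<in>bitstrings l.
     mat_mult_l l (pauli_string_mat P) (pauli_string_mat Q) x y
       = - mat_mult_l l (pauli_string_mat Q) (pauli_string_mat P) x y)"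

definition commute :: "nat \<Rightarrow> pauli list \<Rightarrow> pauli list \<Rightarrow> bool" where
  "commute l P Q \<longleftrightarrow> (\<forall>x\<in>bitstrings l. \<forall>y\<in>bitstrings l.
     mat_mult_l l (pauli_string_mat P) (pauli_string_mat Q) x y
       = mat_mult_l l (pauli_string_mat Q) (pauli_string_mat P) x y)"

definition pauli_realization :: "('n \<Rightarrow> 'n \<Rightarrow> bool) \<Rightarrow> nat \<Rightarrow> ('n \<Rightarrow> pauli list) \<Rightarrow> bool" where
  "pauli_realization E l S \<longleftrightarrow> (\<forall>i. length (S i) = l) \<and>
     (\<forall>i j. (E i j \<longrightarrow> anticommute l (S i) (S j)) \<and> (\<not> E i j \<longrightarrow> commute l (S i) (S j)))"

definition adj_matrix :: "('n::finite \<Rightarrow> 'n \<Rightarrow> bool) \<Rightarrow> bit^'n^'n" where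
  "adj_matrix E = (\<chi> i j. if E i j then 1 else 0)"

end

theory Submission
  imports Defs
begin

text \<open>
  Forgetting phases, a Pauli string of length \<open>l\<close> is a vector \<open>(x, z) \<in> \<bbbF>\<^sub>2\<^sup>2\<^sup>l\<close>, and two
  strings commute or anticommute according to the symplectic form
  \<open>\<Sum>\<^sub>k x\<^sub>k z'\<^sub>k + z\<^sub>k x'\<^sub>k\<close>. A realization of \<open>G\<close> is therefore the same as a family of vectors whose
  symplectic Gram matrix is the adjacency matrix \<open>A\<close>; such a Gram matrix is a sum of \<open>2l\<close>
  outer products, so \<open>rank A \<le> 2l\<close>. Conversely, symplectic Gram--Schmidt splits off one
  hyperbolic pair at a time from the alternating matrix \<open>A\<close>, each time lowering the rank
  by two, which writes \<open>A\<close> as such a Gram matrix with \<open>l = rank A / 2\<close>.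
\<close>

section \<open>Matrices over a field that are sums of outer products\<close>

lemma rank_le_card_sum_outer:
  fixes A :: "'a::field^'n^'m"
  assumes "finite K" and A: "\<And>p q. A$p$q = (\<Sum>k\<in>K. u k p * v k q)"
  shows "rank A \<le> card K"
proof -
  define V where "V = (\<lambda>k. vec_lambda (v k)) ` K"
  have "rows A \<subseteq> vec.span V"
  proof
    fix r assume "r \<in> rows A"
    then obtain p where "r = (\<Sum>k\<in>K. u k p *s vec_lambda (v k))"
      by (auto simp: rows_def row_def vec_eq_iff A sum_component)
    also have "\<dots> \<in> vec.span V"
      by (intro vec.span_sum vec.span_scale vec.span_base) (auto simp: V_def)
    finally show "r \<in> vec.span V" .
  qed
  then have "rank A \<le> card V"
    unfolding row_rank_def_gen using \<open>finite K\<close> by (simp add: V_def vec.dim_le_card)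
  also have "\<dots> \<le> card K"
    unfolding V_def by (rule card_image_le[OF \<open>finite K\<close>])
  finally show ?thesis .
qed

lemma rank_le_symplectic_gram:
  fixes A :: "'a::field^'n^'n"
  assumes "\<And>p q. A$p$q = (\<Sum>k<l. x k p * z k q + z k p * x k q)"
  shows "rank A \<le> 2 * l"
proof -
  define u where "u = (\<lambda>(k, b::bool). if b then x k else z k)"
  define v where "v = (\<lambda>(k, b::bool). if b then z k else x k)"
  have "A$p$q = (\<Sum>kb\<in>{..<l} \<times> UNIV. u kb p * v kb q)" for p q
    by (simp add: assms sum.cartesian_product' u_def v_def UNIV_bool add.commute)
  then have "rank A \<le> card ({..<l} \<times> (UNIV :: bool set))"
    by (intro rank_le_card_sum_outer) auto
  then show ?thesis by (simp add: card_cartesian_product)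
qed

section \<open>Symplectic Gram--Schmidt for alternating matrices over \<open>\<bbbF>\<^sub>2\<close>\<close>

lemma bit_add_self [simp]: "(b::bit) + b = 0"
  by (cases b) auto

lemma bit_add_add_self: "(a::bit) + b + b = a"
  by (metis add.assoc add_0_right bit_add_self)

text \<open>Subtracting the hyperbolic pair spanned by rows \<open>i\<close> and \<open>j\<close> kills columns \<open>i\<close> and
  \<open>j\<close>, so neither row lies in the span of the rows of the reduced matrix.\<close>

lemma rank_symplectic_reduction:
  fixes A :: "bit^'n^'n"
  assumes sym: "\<And>p q. A$p$q = A$q$p" and diag: "\<And>p. A$p$p = 0" and ij: "A$i$j = 1"
  shows "rank (\<chi> p q. A$p$q + (A$i$p * A$j$q + A$j$p * A$i$q)) + 2 \<le> rank A"
proof -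
  define a where "a = A$i"
  define b where "b = A$j"
  define A' :: "bit^'n^'n" where "A' = (\<chi> p q. A$p$q + (A$i$p * A$j$q + A$j$p * A$i$q))"
  have ab: "a$i = 0" "a$j = 1" "b$i = 1" "b$j = 0"
    using ij sym diag by (auto simp: a_def b_def)
  have row_A': "A'$p = A$p + (a$p *s b + b$p *s a)" for p
    by (simp add: vec_eq_iff A'_def a_def b_def)
  have rows_A: "a \<in> rows A" "b \<in> rows A" "A$p \<in> rows A" for p
    unfolding a_def b_def rows_def row_def by auto
  have rows_A'_span: "rows A' \<subseteq> vec.span (rows A)"
  proof
    fix r assume "r \<in> rows A'"
    then obtain p where r: "r = A'$p" unfolding rows_def row_def by auto
    show "r \<in> vec.span (rows A)"
      unfolding r row_A' by (intro vec.span_add vec.span_scale vec.span_base rows_A)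
  qed
  have ij_A': "w$i = 0 \<and> w$j = 0" if "w \<in> vec.span (rows A')" for w
    using that
  proof (induction rule: vec.span_induct_alt)
    case (step c r w)
    then obtain p where "r = A'$p" unfolding rows_def row_def by auto
    moreover have "a$p = A$p$i" "b$p = A$p$j"
      using sym by (simp_all add: a_def b_def)
    ultimately show ?case using step ab by (simp add: row_A')
  qed simp
  have j_b_A': "w$j = 0" if "w \<in> vec.span (insert b (rows A'))" for w
    using that
  proof (induction rule: vec.span_induct_alt)
    case (step c r w)
    then show ?case using ab ij_A' vec.span_base[of r "rows A'"] by (cases "r = b") auto
  qed simp
  have "b \<notin> vec.span (rows A')" "a \<notin> vec.span (insert b (rows A'))"
    using ij_A' j_b_A' ab by force+
  then have "rank A' + 2 = vec.dim (insert a (insert b (rows A')))"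
    unfolding row_rank_def_gen by (simp add: vec.dim_insert)
  also have "\<dots> \<le> rank A"
    unfolding row_rank_def_gen
    using rows_A rows_A'_span vec.span_base by (blast intro: vec.dim_mono)
  finally show ?thesis unfolding A'_def .
qed

lemma alternating_bit_matrix_symplectic_gram:
  fixes A :: "bit^'n^'n"
  assumes "\<And>p q. A$p$q = A$q$p" and "\<And>p. A$p$p = 0"
  shows "\<exists>m x z. 2 * m \<le> rank A \<and> (\<forall>p q. A$p$q = (\<Sum>k<m. x k p * z k q + z k p * x k q))"
  using assms
proof (induction "rank A" arbitrary: A rule: less_induct)
  case less
  show ?case
  proof (cases "\<forall>p q. A$p$q = 0")
    case True
    then show ?thesis by (intro exI[of _ 0]) auto
  next
    case False
    then obtain i j where ij: "A$i$j = 1" by auto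
    define A' :: "bit^'n^'n" where "A' = (\<chi> p q. A$p$q + (A$i$p * A$j$q + A$j$p * A$i$q))"
    have rank_A': "rank A' + 2 \<le> rank A"
      unfolding A'_def using less.prems ij by (rule rank_symplectic_reduction)
    have "\<And>p q. A'$p$q = A'$q$p" "\<And>p. A'$p$p = 0"
      using less.prems by (auto simp: A'_def ac_simps)
    then obtain m x z where m: "2 * m \<le> rank A'"
      and A': "\<forall>p q. A'$p$q = (\<Sum>k<m. x k p * z k q + z k p * x k q)"
      using less.hyps[of A'] rank_A' by fastforce
    define x' where "x' = x(m := (\<lambda>p. A$i$p))"
    define z' where "z' = z(m := (\<lambda>p. A$j$p))"
    have "A$p$q = (\<Sum>k<Suc m. x' k p * z' k q + z' k p * x' k q)" for p q
    proof -
      have "A$p$q = A'$p$q + (A$i$p * A$j$q + A$j$p * A$i$q)"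
        by (simp only: A'_def vec_lambda_beta bit_add_add_self)
      also have "A'$p$q = (\<Sum>k<m. x' k p * z' k q + z' k p * x' k q)"
        unfolding A'[rule_format] x'_def z'_def by (rule sum.cong) auto
      finally show ?thesis by (simp add: x'_def z'_def)
    qed
    moreover have "2 * Suc m \<le> rank A" using m rank_A' by simp
    ultimately show ?thesis by blast
  qed
qed

section \<open>Commutation of Pauli strings\<close>

fun pauli_x :: "pauli \<Rightarrow> bit" where
  "pauli_x PI = 0" | "pauli_x PX = 1" | "pauli_x PY = 1" | "pauli_x PZ = 0"

fun pauli_z :: "pauli \<Rightarrow> bit" where
  "pauli_z PI = 0" | "pauli_z PX = 0" | "pauli_z PY = 1" | "pauli_z PZ = 1"

definition pauli_symp :: "pauli \<Rightarrow> pauli \<Rightarrow> bit" where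
  "pauli_symp p q = pauli_x p * pauli_z q + pauli_z p * pauli_x q"

definition pauli_string_symp :: "pauli list \<Rightarrow> pauli list \<Rightarrow> bit" where
  "pauli_string_symp P Q = (\<Sum>k<length P. pauli_symp (P!k) (Q!k))"

definition bit_sign :: "bit \<Rightarrow> complex" where
  "bit_sign b = (if b = 0 then 1 else -1)"

lemma bit_sign_add: "bit_sign (a + b) = bit_sign a * bit_sign b"
  by (cases a; cases b) (auto simp: bit_sign_def)

lemma bit_sign_sum: "bit_sign (\<Sum>k\<in>K. f k) = (\<Prod>k\<in>K. bit_sign (f k))"
proof (induction K rule: infinite_finite_induct)
  case (insert k K)
  then show ?case by (simp only: sum.insert[OF insert.hyps] prod.insert[OF insert.hyps] bit_sign_add)
qed (simp_all add: bit_sign_def)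

definition pauli_mult_entry :: "pauli \<Rightarrow> pauli \<Rightarrow> bool \<Rightarrow> bool \<Rightarrow> complex" where
  "pauli_mult_entry p q a c = (\<Sum>b\<in>UNIV. pauli_mat p a b * pauli_mat q b c)"

lemma pauli_mult_entry_swap:
  "pauli_mult_entry p q a c = bit_sign (pauli_symp p q) * pauli_mult_entry q p a c"
  by (cases p; cases q; cases a; cases c)
    (simp_all add: pauli_mult_entry_def UNIV_bool bit_sign_def pauli_symp_def)

lemma pauli_mult_entry_nonzero: "\<exists>c. pauli_mult_entry p q False c \<noteq> 0"
  by (cases p; cases q) (auto simp: pauli_mult_entry_def UNIV_bool)

lemma bitstrings_Suc: "bitstrings (Suc l) = (\<lambda>(b, z). b # z) ` (UNIV \<times> bitstrings l)"
  unfolding bitstrings_def by (auto simp: image_iff length_Suc_conv)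

lemma pauli_string_mat_Cons:
  "pauli_string_mat (p # P) (a # x) (b # y) = pauli_mat p a b * pauli_string_mat P x y"
  unfolding pauli_string_mat_def length_Cons prod.lessThan_Suc_shift by simp

lemma mat_mult_pauli_string:
  assumes "length P = l" "length Q = l" "x \<in> bitstrings l" "y \<in> bitstrings l"
  shows "mat_mult_l l (pauli_string_mat P) (pauli_string_mat Q) x y
    = (\<Prod>k<l. pauli_mult_entry (P!k) (Q!k) (x!k) (y!k))"
  using assms
proof (induction l arbitrary: P Q x y)
  case 0
  then show ?case by (simp add: mat_mult_l_def bitstrings_def pauli_string_mat_def)
next
  case (Suc l)
  obtain p P' where P: "P = p # P'" "length P' = l" using Suc.prems by (cases P) auto
  obtain q Q' where Q: "Q = q # Q'" "length Q' = l" using Suc.prems by (cases Q) auto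
  obtain a x' where x: "x = a # x'" "x' \<in> bitstrings l"
    using Suc.prems by (cases x) (auto simp: bitstrings_def)
  obtain c y' where y: "y = c # y'" "y' \<in> bitstrings l"
    using Suc.prems by (cases y) (auto simp: bitstrings_def)
  have inj: "inj_on (\<lambda>(b, z). b # z) (UNIV \<times> bitstrings l)" by (auto simp: inj_on_def)
  have "mat_mult_l (Suc l) (pauli_string_mat P) (pauli_string_mat Q) x y
      = (\<Sum>b\<in>UNIV. \<Sum>z\<in>bitstrings l.
           pauli_mat p a b * pauli_mat q b c * (pauli_string_mat P' x' z * pauli_string_mat Q' z y'))"
    unfolding mat_mult_l_def bitstrings_Suc sum.reindex[OF inj] sum.cartesian_product'
    by (simp add: P(1) Q(1) x(1) y(1) pauli_string_mat_Cons mult_ac)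
  also have "\<dots> = pauli_mult_entry p q a c
      * mat_mult_l l (pauli_string_mat P') (pauli_string_mat Q') x' y'"
    by (simp add: pauli_mult_entry_def mat_mult_l_def sum_distrib_left sum_distrib_right)
      (rule sum.swap)
  also have "\<dots> = (\<Prod>k<Suc l. pauli_mult_entry (P!k) (Q!k) (x!k) (y!k))"
    unfolding Suc.IH[OF P(2) Q(2) x(2) y(2)] prod.lessThan_Suc_shift by (simp add: P Q x y)
  finally show ?case .
qed

lemma mat_mult_pauli_string_swap:
  assumes "length P = l" "length Q = l" "x \<in> bitstrings l" "y \<in> bitstrings l"
  shows "mat_mult_l l (pauli_string_mat P) (pauli_string_mat Q) x y
    = bit_sign (pauli_string_symp P Q) * mat_mult_l l (pauli_string_mat Q) (pauli_string_mat P) x y"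
  using assms
  by (simp add: mat_mult_pauli_string pauli_mult_entry_swap[of "P!_" "Q!_"] prod.distrib
      pauli_string_symp_def bit_sign_sum)

lemma mat_mult_pauli_string_nonzero:
  assumes "length P = l" "length Q = l"
  obtains x y where "x \<in> bitstrings l" "y \<in> bitstrings l"
    "mat_mult_l l (pauli_string_mat P) (pauli_string_mat Q) x y \<noteq> 0"
proof -
  have "\<forall>k. \<exists>c. pauli_mult_entry (P!k) (Q!k) False c \<noteq> 0"
    using pauli_mult_entry_nonzero by blast
  then obtain c where c: "\<And>k. pauli_mult_entry (P!k) (Q!k) False (c k) \<noteq> 0"
    by (metis choice)
  define x where "x = replicate l False"
  define y where "y = map c [0..<l]"
  have xy: "x \<in> bitstrings l" "y \<in> bitstrings l" by (auto simp: x_def y_def bitstrings_def)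
  have "mat_mult_l l (pauli_string_mat P) (pauli_string_mat Q) x y
      = (\<Prod>k<l. pauli_mult_entry (P!k) (Q!k) False (c k))"
    unfolding mat_mult_pauli_string[OF assms xy] by (simp add: x_def y_def)
  also have "\<dots> \<noteq> 0" using c by (simp add: prod_zero_iff)
  finally show ?thesis using xy that by blast
qed

lemma anticommute_iff_symp:
  assumes "length P = l" "length Q = l"
  shows "anticommute l P Q \<longleftrightarrow> pauli_string_symp P Q = 1"
proof
  assume "anticommute l P Q"
  obtain x y where xy: "x \<in> bitstrings l" "y \<in> bitstrings l"
    and "mat_mult_l l (pauli_string_mat P) (pauli_string_mat Q) x y \<noteq> 0"
    using mat_mult_pauli_string_nonzero[OF assms] .
  then show "pauli_string_symp P Q = 1"
    using \<open>anticommute l P Q\<close> mat_mult_pauli_string_swap[OF assms xy]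
    by (cases "pauli_string_symp P Q") (auto simp: anticommute_def bit_sign_def)
qed (simp add: anticommute_def mat_mult_pauli_string_swap[OF assms] bit_sign_def)

lemma commute_iff_symp:
  assumes "length P = l" "length Q = l"
  shows "commute l P Q \<longleftrightarrow> pauli_string_symp P Q = 0"
proof
  assume "commute l P Q"
  obtain x y where xy: "x \<in> bitstrings l" "y \<in> bitstrings l"
    and "mat_mult_l l (pauli_string_mat P) (pauli_string_mat Q) x y \<noteq> 0"
    using mat_mult_pauli_string_nonzero[OF assms] .
  then show "pauli_string_symp P Q = 0"
    using \<open>commute l P Q\<close> mat_mult_pauli_string_swap[OF assms xy]
    by (cases "pauli_string_symp P Q") (auto simp: commute_def bit_sign_def)
qed (simp add: commute_def mat_mult_pauli_string_swap[OF assms] bit_sign_def)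

lemma pauli_realization_iff_symp:
  assumes "\<And>i. length (S i) = l"
  shows "pauli_realization E l S \<longleftrightarrow> (\<forall>i j. E i j \<longleftrightarrow> pauli_string_symp (S i) (S j) = 1)"
  using assms by (force simp: pauli_realization_def anticommute_iff_symp commute_iff_symp)

section \<open>Realizations and the rank of the adjacency matrix\<close>

lemma adj_matrix_eq_symp_gram:
  assumes "pauli_realization E l S"
  shows "adj_matrix E $ p $ q
    = (\<Sum>k<l. pauli_x (S p ! k) * pauli_z (S q ! k) + pauli_z (S p ! k) * pauli_x (S q ! k))"
proof -
  have len: "\<And>i. length (S i) = l" using assms by (simp add: pauli_realization_def)
  then have "E p q \<longleftrightarrow> pauli_string_symp (S p) (S q) = 1"
    using assms pauli_realization_iff_symp by blast
  then have "adj_matrix E $ p $ q = pauli_string_symp (S p) (S q)"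
    by (cases "pauli_string_symp (S p) (S q)") (simp_all add: adj_matrix_def)
  then show ?thesis by (simp add: pauli_string_symp_def pauli_symp_def len)
qed

lemma rank_adj_matrix_le_pauli_realization:
  assumes "pauli_realization E l S"
  shows "rank (adj_matrix E) \<le> 2 * l"
  using adj_matrix_eq_symp_gram[OF assms] by (rule rank_le_symplectic_gram)

definition pauli_of_bits :: "bit \<Rightarrow> bit \<Rightarrow> pauli" where
  "pauli_of_bits a b = (if a = 0 then (if b = 0 then PI else PZ) else (if b = 0 then PX else PY))"

lemma pauli_x_of_bits [simp]: "pauli_x (pauli_of_bits a b) = a"
  and pauli_z_of_bits [simp]: "pauli_z (pauli_of_bits a b) = b"
  by (cases a; cases b; simp add: pauli_of_bits_def)+

lemma pauli_realization_of_symp_gram: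
  assumes "\<And>p q. adj_matrix E $ p $ q = (\<Sum>k<m. x k p * z k q + z k p * x k q)"
  shows "pauli_realization E m (\<lambda>i. map (\<lambda>k. pauli_of_bits (x k i) (z k i)) [0..<m])"
    (is "pauli_realization E m ?S")
proof -
  have "pauli_string_symp (?S p) (?S q) = adj_matrix E $ p $ q" for p q
    by (simp add: assms pauli_string_symp_def pauli_symp_def)
  then show ?thesis
    by (subst pauli_realization_iff_symp) (simp_all add: adj_matrix_def)
qed

theorem theorem6:
  fixes E :: "'n::finite \<Rightarrow> 'n \<Rightarrow> bool"
  assumes sym: "\<And>i j. E i j \<Longrightarrow> E j i"
    and irrefl: "\<And>i. \<not> E i i"
  shows "(\<forall>l S. pauli_realization E l S \<longrightarrow> real (rank (adj_matrix E)) / 2 \<le> real l)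
       \<and> (\<exists>l S. 2 * l = rank (adj_matrix E) \<and> pauli_realization E l S)"
proof
  show "\<forall>l S. pauli_realization E l S \<longrightarrow> real (rank (adj_matrix E)) / 2 \<le> real l"
    using rank_adj_matrix_le_pauli_realization by fastforce
  have "\<And>p q. adj_matrix E $ p $ q = adj_matrix E $ q $ p" "\<And>p. adj_matrix E $ p $ p = 0"
    using sym irrefl by (auto simp: adj_matrix_def)
  then obtain m x z where m: "2 * m \<le> rank (adj_matrix E)"
    and gram: "\<And>p q. adj_matrix E $ p $ q = (\<Sum>k<m. x k p * z k q + z k p * x k q)"
    using alternating_bit_matrix_symplectic_gram by blast
  note realization = pauli_realization_of_symp_gram[OF gram]
  then have "2 * m = rank (adj_matrix E)"
    using m rank_adj_matrix_le_pauli_realization by (meson le_antisym)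
  with realization show "\<exists>l S. 2 * l = rank (adj_matrix E) \<and> pauli_realization E l S" by blast
qed

end
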